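(* Given $n$ variables $\mathcal{X}=\{x_1,\dots,x_n\}$ and a set $V=\{v_1,\dots,v_m\}$ of expected-value voters (each with preferences $p_{v_j}:\mathcal{X}\to[-1,1]$), one can construct, in time $O(n\cdot m)$, an optimal theory, i.e., a consistent theory $T$ over $\mathcal{X}$ maximizing $\sum_{v\in V}ut_v(T)$ over all consistent theories.
   Context: A theory is a finite set of propositional formulas over $\mathcal{X}$. Worlds are assignments $\omega:\mathcal{X}\to\{-1,1\}$ ($1$ = true, $-1$ = false); $\omega\models T$ means $\omega$ satisfies every formula of $T$. A voter $v$ has utility for a world $u_v(\omega)=\sum_{x_i\in\mathcal{X}}p_v(x_i)\,\omega(x_i)$. An expected-value voter's utility for a theory is $ut_v(T)=\frac{\sum_{\omega\models T}u_v(\omega)}{|\{\omega:\omega\models T\}|}$. Arithmetic operations are counted as unit cost. *)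

theory Defs
  imports Complex_Main "HOL-Library.FuncSet"
begin

text \<open>Variables x_1..x_n are represented by the indices 0..<n.\<close>

datatype form =
    Var nat
  | TT
  | FF
  | Neg form
  | Conj form form
  | Disj form form
  | Imp form form

fun vars :: "form \<Rightarrow> nat set" where
  "vars (Var i) = {i}"
| "vars TT = {}"
| "vars FF = {}"
| "vars (Neg f) = vars f"
| "vars (Conj f g) = vars f \<union> vars g"
| "vars (Disj f g) = vars f \<union> vars g"
| "vars (Imp f g) = vars f \<union> vars g"

text \<open>A world assigns each variable a value in {-1,1} (1 = true, -1 = false).\<close>

definition worlds :: "nat \<Rightarrow> (nat \<Rightarrow> int) set" where
  "worlds n = ({..<n} \<rightarrow>\<^sub>E {-1, 1})"

fun sat :: "(nat \<Rightarrow> int) \<Rightarrow> form \<Rightarrow> bool" where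
  "sat w (Var i) = (w i = 1)"
| "sat w TT = True"
| "sat w FF = False"
| "sat w (Neg f) = (\<not> sat w f)"
| "sat w (Conj f g) = (sat w f \<and> sat w g)"
| "sat w (Disj f g) = (sat w f \<or> sat w g)"
| "sat w (Imp f g) = (sat w f \<longrightarrow> sat w g)"

definition theory_over :: "nat \<Rightarrow> form set \<Rightarrow> bool" where
  "theory_over n T \<longleftrightarrow> finite T \<and> (\<forall>f\<in>T. vars f \<subseteq> {..<n})"

definition models :: "nat \<Rightarrow> form set \<Rightarrow> (nat \<Rightarrow> int) set" where
  "models n T = {w \<in> worlds n. \<forall>f\<in>T. sat w f}"

definition consistent :: "nat \<Rightarrow> form set \<Rightarrow> bool" where
  "consistent n T \<longleftrightarrow> models n T \<noteq> {}"

text \<open>p j i is the preference of voter j (j < m) for variable i (i < n).\<close>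

definition u_world :: "nat \<Rightarrow> (nat \<Rightarrow> nat \<Rightarrow> real) \<Rightarrow> nat \<Rightarrow> (nat \<Rightarrow> int) \<Rightarrow> real" where
  "u_world n p j w = (\<Sum>i<n. p j i * real_of_int (w i))"

definition ut :: "nat \<Rightarrow> (nat \<Rightarrow> nat \<Rightarrow> real) \<Rightarrow> nat \<Rightarrow> form set \<Rightarrow> real" where
  "ut n p j T = (\<Sum>w\<in>models n T. u_world n p j w) / real (card (models n T))"

definition total_ut :: "nat \<Rightarrow> nat \<Rightarrow> (nat \<Rightarrow> nat \<Rightarrow> real) \<Rightarrow> form set \<Rightarrow> real" where
  "total_ut n m p T = (\<Sum>j<m. ut n p j T)"

text \<open>Each function f comes with a step-counting function T_f, written by hand following the
  translation of HOL-Library Time_Commands (one step per equation applied, plus the cost of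
  called functions); additionally each arithmetic operation / comparison costs one unit.\<close>

text \<open>Input: a list of m voters, each a list of n preferences (row j, entry i = p_{v_j}(x_i)).\<close>

fun add_vec :: "real list \<Rightarrow> real list \<Rightarrow> real list" where
  "add_vec (x # xs) (y # ys) = (x + y) # add_vec xs ys"
| "add_vec _ _ = []"

fun T_add_vec :: "real list \<Rightarrow> real list \<Rightarrow> nat" where
  "T_add_vec (x # xs) (y # ys) = 1 + T_add_vec xs ys + 1"
| "T_add_vec _ _ = 1"

fun zeros :: "nat \<Rightarrow> real list" where
  "zeros 0 = []"
| "zeros (Suc n) = 0 # zeros n"

fun T_zeros :: "nat \<Rightarrow> nat" where
  "T_zeros 0 = 1"
| "T_zeros (Suc n) = T_zeros n + 1"

fun sum_rows :: "nat \<Rightarrow> real list list \<Rightarrow> real list" where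
  "sum_rows n [] = zeros n"
| "sum_rows n (r # rs) = add_vec r (sum_rows n rs)"

fun T_sum_rows :: "nat \<Rightarrow> real list list \<Rightarrow> nat" where
  "T_sum_rows n [] = T_zeros n + 1"
| "T_sum_rows n (r # rs) = T_sum_rows n rs + T_add_vec r (sum_rows n rs) + 1"

fun lits :: "nat \<Rightarrow> real list \<Rightarrow> form list" where
  "lits i [] = []"
| "lits i (s # ss) = (if 0 \<le> s then Var i else Neg (Var i)) # lits (Suc i) ss"

fun T_lits :: "nat \<Rightarrow> real list \<Rightarrow> nat" where
  "T_lits i [] = 1"
| "T_lits i (s # ss) = 1 + T_lits (Suc i) ss + 1"

fun opt_theory :: "nat \<Rightarrow> real list list \<Rightarrow> form list" where
  "opt_theory n P = lits 0 (sum_rows n P)"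

fun T_opt_theory :: "nat \<Rightarrow> real list list \<Rightarrow> nat" where
  "T_opt_theory n P = T_sum_rows n P + T_lits 0 (sum_rows n P) + 1"

definition pref_of :: "real list list \<Rightarrow> nat \<Rightarrow> nat \<Rightarrow> real" where
  "pref_of P j i = P ! j ! i"

end

theory Submission
  imports Defs
begin

text \<open>Total utility is linear in the voters, so it equals the average, over the models of a
  theory, of \<open>\<Sum>i. S i * w i\<close> with the aggregated preference \<open>S i = \<Sum>j. p j i\<close>. Each world
  scores at most \<open>\<Sum>i. \<bar>S i\<bar>\<close>, and this value is attained by the theory of literals that sets
  \<open>x\<^sub>i\<close> to the sign of \<open>S i\<close>, whose only model is that world. Computing \<open>S\<close> is one pass
  over the \<open>m \<times> n\<close> input table.\<close>

lemma length_add_vec: "length (add_vec xs ys) = min (length xs) (length ys)"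
  by (induction xs ys rule: add_vec.induct) auto

lemma nth_add_vec: "i < min (length xs) (length ys) \<Longrightarrow> add_vec xs ys ! i = xs ! i + ys ! i"
  by (induction xs ys arbitrary: i rule: add_vec.induct) (auto simp: nth_Cons split: nat.splits)

lemma length_zeros: "length (zeros n) = n"
  by (induction n) auto

lemma nth_zeros: "i < n \<Longrightarrow> zeros n ! i = 0"
  by (induction n arbitrary: i) (auto simp: nth_Cons split: nat.splits)

lemma length_sum_rows: "\<forall>r\<in>set P. length r = n \<Longrightarrow> length (sum_rows n P) = n"
  by (induction P) (auto simp: length_zeros length_add_vec)

lemma nth_sum_rows:
  "\<forall>r\<in>set P. length r = n \<Longrightarrow> i < n \<Longrightarrow> sum_rows n P ! i = (\<Sum>j<length P. P ! j ! i)"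
  by (induction P)
     (simp_all add: nth_zeros nth_add_vec length_sum_rows sum.lessThan_Suc_shift
               del: sum.lessThan_Suc)

lemma T_zeros_eq: "T_zeros n = n + 1"
  by (induction n) auto

lemma T_add_vec_le: "T_add_vec xs ys \<le> 2 * length xs + 1"
  by (induction xs ys rule: T_add_vec.induct) auto

lemma T_lits_eq: "T_lits i ss = 2 * length ss + 1"
  by (induction i ss rule: T_lits.induct) auto

lemma T_sum_rows_le:
  "\<forall>r\<in>set P. length r = n \<Longrightarrow> T_sum_rows n P \<le> n + 2 + length P * (2 * n + 2)"
proof (induction P)
  case Nil
  then show ?case by (simp add: T_zeros_eq)
next
  case (Cons r P)
  have "T_add_vec r (sum_rows n P) \<le> 2 * n + 1"
    using T_add_vec_le[of r] Cons.prems by simp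
  then show ?case using Cons by simp
qed

lemma T_opt_theory_le:
  assumes "\<forall>r\<in>set P. length r = n"
  shows "T_opt_theory n P \<le> 2 * n * length P + 2 * length P + 3 * n + 4"
  using T_sum_rows_le[OF assms]
  by (simp add: T_lits_eq length_sum_rows[OF assms] algebra_simps)

lemma T_opt_theory_le_linear:
  assumes "\<forall>r\<in>set P. length r = n" and "1 \<le> n" and "1 \<le> length P"
  shows "T_opt_theory n P \<le> 11 * n * length P"
proof -
  have "n \<le> n * length P" "length P \<le> n * length P" "1 \<le> n * length P"
    using assms(2,3) by simp_all
  moreover have "11 * n * length P = 11 * (n * length P)" "2 * n * length P = 2 * (n * length P)"
    by simp_all
  ultimately show ?thesis using T_opt_theory_le[OF assms(1)] by linarith
qed

lemma set_lits:
  "set (lits i ss) = (\<lambda>k. if 0 \<le> ss ! k then Var (i + k) else Neg (Var (i + k))) ` {..<length ss}"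
proof (induction i ss rule: lits.induct)
  case (1 i)
  then show ?case by simp
next
  case (2 i s ss)
  have "{..<length (s # ss)} = insert 0 (Suc ` {..<length ss})"
    by (auto simp: image_iff less_Suc_eq_0_disj)
  then show ?case using 2 by (auto simp: image_image)
qed

lemma theory_over_lits: "theory_over (length ss) (set (lits 0 ss))"
  by (auto simp: theory_over_def set_lits)

definition sign_world :: "nat \<Rightarrow> real list \<Rightarrow> nat \<Rightarrow> int" where
  "sign_world n s = (\<lambda>i. if i < n then (if 0 \<le> s ! i then 1 else -1) else undefined)"

lemma worlds_value: "w \<in> worlds n \<Longrightarrow> i < n \<Longrightarrow> w i = -1 \<or> w i = 1"
  by (auto simp: worlds_def PiE_def Pi_def)

lemma models_lits: "models (length s) (set (lits 0 s)) = {sign_world (length s) s}"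
proof (intro set_eqI iffI)
  fix w
  assume "w \<in> models (length s) (set (lits 0 s))"
  then have W: "w \<in> worlds (length s)"
    and S: "\<forall>k<length s. sat w (if 0 \<le> s ! k then Var k else Neg (Var k))"
    by (auto simp: models_def set_lits)
  have "w i = sign_world (length s) s i" for i
  proof (cases "i < length s")
    case True
    then show ?thesis using S worlds_value[OF W True] by (auto simp: sign_world_def)
  next
    case False
    with W show ?thesis by (auto simp: worlds_def PiE_def extensional_def sign_world_def)
  qed
  then show "w \<in> {sign_world (length s) s}" by auto
next
  fix w
  assume "w \<in> {sign_world (length s) s}"
  then show "w \<in> models (length s) (set (lits 0 s))"
    by (auto simp: models_def set_lits worlds_def sign_world_def PiE_def extensional_def)
qed

lemma finite_models: "finite (models n T)"
proof (rule finite_subset)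
  show "models n T \<subseteq> worlds n" by (auto simp: models_def)
  show "finite (worlds n)" unfolding worlds_def by (intro finite_PiE) auto
qed

lemma total_ut_eq_aggregate:
  "total_ut n m p T =
     (\<Sum>w\<in>models n T. \<Sum>i<n. (\<Sum>j<m. p j i) * real_of_int (w i)) / real (card (models n T))"
proof -
  have "total_ut n m p T =
      (\<Sum>j<m. \<Sum>w\<in>models n T. \<Sum>i<n. p j i * real_of_int (w i)) / real (card (models n T))"
    unfolding total_ut_def ut_def u_world_def sum_divide_distrib ..
  also have "(\<Sum>j<m. \<Sum>w\<in>models n T. \<Sum>i<n. p j i * real_of_int (w i)) =
      (\<Sum>w\<in>models n T. \<Sum>i<n. \<Sum>j<m. p j i * real_of_int (w i))"
    by (subst sum.swap) (intro sum.cong refl sum.swap)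
  finally show ?thesis by (simp add: sum_distrib_right)
qed

lemma world_score_le: "w \<in> worlds n \<Longrightarrow> (\<Sum>i<n. S i * real_of_int (w i)) \<le> (\<Sum>i<n. \<bar>S i\<bar>)"
  by (rule sum_mono) (use worlds_value in fastforce)

lemma total_ut_le_aggregate_abs:
  assumes "consistent n T"
  shows "total_ut n m p T \<le> (\<Sum>i<n. \<bar>\<Sum>j<m. p j i\<bar>)"
proof -
  let ?M = "models n T" and ?B = "\<Sum>i<n. \<bar>\<Sum>j<m. p j i\<bar>"
  have card_pos: "real (card ?M) > 0"
    using assms finite_models by (simp add: consistent_def card_gt_0_iff)
  have "(\<Sum>w\<in>?M. \<Sum>i<n. (\<Sum>j<m. p j i) * real_of_int (w i)) \<le> (\<Sum>w\<in>?M. ?B)"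
    by (intro sum_mono world_score_le) (auto simp: models_def)
  also have "\<dots> = real (card ?M) * ?B" by simp
  finally show ?thesis
    using card_pos by (simp add: total_ut_eq_aggregate divide_le_eq mult.commute)
qed

lemma total_ut_lits_sum_rows:
  assumes "\<forall>r\<in>set P. length r = n"
  shows "total_ut n (length P) (pref_of P) (set (lits 0 (sum_rows n P))) =
           (\<Sum>i<n. \<bar>\<Sum>j<length P. pref_of P j i\<bar>)"
proof -
  let ?s = "sum_rows n P"
  have len: "length ?s = n" using length_sum_rows[OF assms] .
  have "total_ut n (length P) (pref_of P) (set (lits 0 ?s)) =
          (\<Sum>i<n. ?s ! i * real_of_int (sign_world n ?s i))"
    using models_lits[of ?s]
    by (simp add: len total_ut_eq_aggregate nth_sum_rows[OF assms] pref_of_def)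
  also have "\<dots> = (\<Sum>i<n. \<bar>\<Sum>j<length P. pref_of P j i\<bar>)"
    by (intro sum.cong) (auto simp: sign_world_def nth_sum_rows[OF assms] pref_of_def)
  finally show ?thesis .
qed

theorem theorem8:
  "\<exists>c::nat. \<forall>n m (P :: real list list).
     n \<ge> 1 \<and> m \<ge> 1 \<and> length P = m \<and> (\<forall>row\<in>set P. length row = n \<and> (\<forall>x\<in>set row. -1 \<le> x \<and> x \<le> 1))
     \<longrightarrow> (let T = set (opt_theory n P) in
           theory_over n T \<and> consistent n T
           \<and> (\<forall>T'. theory_over n T' \<and> consistent n T'
                   \<longrightarrow> total_ut n m (pref_of P) T' \<le> total_ut n m (pref_of P) T)
           \<and> T_opt_theory n P \<le> c * n * m)"
proof (intro exI[of _ 11] allI impI)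
  fix n m :: nat and P :: "real list list"
  assume "n \<ge> 1 \<and> m \<ge> 1 \<and> length P = m \<and>
    (\<forall>row\<in>set P. length row = n \<and> (\<forall>x\<in>set row. -1 \<le> x \<and> x \<le> 1))"
  then have rows: "\<forall>r\<in>set P. length r = n" and "n \<ge> 1" "m \<ge> 1" and m: "m = length P"
    by auto
  have len: "length (sum_rows n P) = n" using length_sum_rows[OF rows] .
  have "theory_over n (set (opt_theory n P))"
    using theory_over_lits[of "sum_rows n P"] by (simp add: len)
  moreover have "consistent n (set (opt_theory n P))"
    using models_lits[of "sum_rows n P"] by (simp add: len consistent_def)
  moreover have "total_ut n m (pref_of P) T' \<le> total_ut n m (pref_of P) (set (opt_theory n P))"
    if "consistent n T'" for T'
    using total_ut_le_aggregate_abs[OF that] total_ut_lits_sum_rows[OF rows] by (simp add: m)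
  moreover have "T_opt_theory n P \<le> 11 * n * m"
    using T_opt_theory_le_linear[OF rows] \<open>n \<ge> 1\<close> \<open>m \<ge> 1\<close> by (simp add: m)
  ultimately show "let T = set (opt_theory n P) in theory_over n T \<and> consistent n T
      \<and> (\<forall>T'. theory_over n T' \<and> consistent n T'
              \<longrightarrow> total_ut n m (pref_of P) T' \<le> total_ut n m (pref_of P) T)
      \<and> T_opt_theory n P \<le> 11 * n * m"
    by (simp add: Let_def)
qed

end
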